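(* Let $B$ be a unital $C^*$-algebra with a $*$-isomorphism $\psi:B\to M_n\otimes B$ satisfying $\psi(1)=I_n\otimes1$, let $m\ge1$, and suppose that $A$ is a maximal abelian $*$-subalgebra of $B$ with $\sigma_m(A)\subset A$. Then $\chi_{mij}(A)\subset A$ for all $1\le i,j\le n$.
   Context: $M_n=M_n(\mathbb{C})$, matrix units $E_{kl}$, identity $I_n$. Define $\psi_0=\mathrm{id}_B$, $\psi_{m+1}=(\mathrm{id}^{\otimes m}\otimes\psi)\circ\psi_m:B\to M_n^{\otimes(m+1)}\otimes B$. With $f(b)=I_n\otimes b$, for $m\ge1$ let $\sigma_m=\psi_m^{-1}\circ(\mathrm{id}^{\otimes(m-1)}\otimes f)\circ\psi_{m-1}:B\to B$. Let $e_{ij}:M_n\to\mathbb{C}$ be the linear functional $e_{ij}(E_{kl})=\delta_{ik}\delta_{jl}$, and for $m\ge1$ let $\chi_{mij}=\psi_{m-1}^{-1}\circ(\mathrm{id}^{\otimes(m-1)}\otimes e_{ij}\otimes\mathrm{id}_B)\circ\psi_m:B\to B$ (slice map on the $m$-th tensor factor). *)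

theory Defs
  imports Complex_Main
begin

class cstar_algebra = real_normed_algebra_1 + banach +
  fixes scaleC :: "complex \<Rightarrow> 'a \<Rightarrow> 'a"
    and cstar :: "'a \<Rightarrow> 'a"
  assumes scaleC_add_right: "scaleC c (x + y) = scaleC c x + scaleC c y"
    and scaleC_add_left: "scaleC (c + d) x = scaleC c x + scaleC d x"
    and scaleC_scaleC: "scaleC c (scaleC d x) = scaleC (c * d) x"
    and scaleC_one: "scaleC 1 x = x"
    and scaleR_scaleC: "scaleR r x = scaleC (complex_of_real r) x"
    and norm_scaleC: "norm (scaleC c x) = cmod c * norm x"
    and mult_scaleC_left: "scaleC c x * y = scaleC c (x * y)"
    and mult_scaleC_right: "x * scaleC c y = scaleC c (x * y)"
    and cstar_cstar: "cstar (cstar x) = x"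
    and cstar_add: "cstar (x + y) = cstar x + cstar y"
    and cstar_scaleC: "cstar (scaleC c x) = scaleC (cnj c) (cstar x)"
    and cstar_mult: "cstar (x * y) = cstar y * cstar x"
    and cstar_identity: "norm (cstar x * x) = (norm x)\<^sup>2"

text \<open>An element of M_n \<otimes> B is represented as a function X :: nat => nat => 'b,
  with X i j the B-coefficient of E_ij (indices 1..n), zero outside 1..n.\<close>

definition Mn_carrier :: "nat \<Rightarrow> (nat \<Rightarrow> nat \<Rightarrow> 'b::zero) set" where
  "Mn_carrier n = {X. \<forall>i j. (i \<notin> {1..n} \<or> j \<notin> {1..n}) \<longrightarrow> X i j = 0}"

definition Mn_unit :: "nat \<Rightarrow> nat \<Rightarrow> nat \<Rightarrow> 'b::{zero,one}" where
  "Mn_unit n = (\<lambda>i j. if i = j \<and> i \<in> {1..n} then 1 else 0)"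

definition star_iso_Mn :: "nat \<Rightarrow> ('b::cstar_algebra \<Rightarrow> nat \<Rightarrow> nat \<Rightarrow> 'b) \<Rightarrow> bool" where
  "star_iso_Mn n \<psi> \<longleftrightarrow>
     inj \<psi> \<and> range \<psi> = Mn_carrier n \<and>
     (\<forall>x y. \<psi> (x + y) = (\<lambda>i j. \<psi> x i j + \<psi> y i j)) \<and>
     (\<forall>c x. \<psi> (scaleC c x) = (\<lambda>i j. scaleC c (\<psi> x i j))) \<and>
     (\<forall>x y. \<psi> (x * y) = (\<lambda>i j. \<Sum>k\<in>{1..n}. \<psi> x i k * \<psi> y k j)) \<and>
     (\<forall>x. \<psi> (cstar x) = (\<lambda>i j. cstar (\<psi> x j i)))"

text \<open>An element of M_n^{\<otimes>m} \<otimes> B is a function of two index lists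
  ks = [k1,...,km], ls = [l1,...,lm]; its value is the B-coefficient of
  E_{k1 l1} \<otimes> ... \<otimes> E_{km lm} (zero for lists of wrong length).
  psi_0 = id, psi_{m+1} = (id^{\<otimes>m} \<otimes> psi) \<circ> psi_m: psi is applied in the last
  (B) slot, producing a new M_n factor at position m+1.\<close>

fun psi_iter :: "('b::zero \<Rightarrow> nat \<Rightarrow> nat \<Rightarrow> 'b) \<Rightarrow> nat \<Rightarrow> 'b \<Rightarrow> nat list \<Rightarrow> nat list \<Rightarrow> 'b" where
  "psi_iter \<psi> 0 b ks ls = (if ks = [] \<and> ls = [] then b else 0)"
| "psi_iter \<psi> (Suc m) b ks ls =
     (if ks \<noteq> [] \<and> ls \<noteq> []
      then \<psi> (psi_iter \<psi> m b (butlast ks) (butlast ls)) (last ks) (last ls)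
      else 0)"

text \<open>(id^{\<otimes>(m-1)} \<otimes> f) with f(b) = I_n \<otimes> b: inserts I_n as the last M_n factor.\<close>

definition ampl :: "nat \<Rightarrow> (nat list \<Rightarrow> nat list \<Rightarrow> 'b::zero) \<Rightarrow> nat list \<Rightarrow> nat list \<Rightarrow> 'b" where
  "ampl n Y = (\<lambda>ks ls. if ks \<noteq> [] \<and> ls \<noteq> [] \<and> last ks = last ls \<and> last ks \<in> {1..n}
                        then Y (butlast ks) (butlast ls) else 0)"

text \<open>Slice map id^{\<otimes>(m-1)} \<otimes> e_ij \<otimes> id_B on the m-th (= last) M_n factor.\<close>

definition slice :: "nat \<Rightarrow> nat \<Rightarrow> (nat list \<Rightarrow> nat list \<Rightarrow> 'b) \<Rightarrow> nat list \<Rightarrow> nat list \<Rightarrow> 'b" where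
  "slice i j X = (\<lambda>ks ls. X (ks @ [i]) (ls @ [j]))"

definition sigma :: "nat \<Rightarrow> ('b::zero \<Rightarrow> nat \<Rightarrow> nat \<Rightarrow> 'b) \<Rightarrow> nat \<Rightarrow> 'b \<Rightarrow> 'b" where
  "sigma n \<psi> m b = the_inv_into UNIV (psi_iter \<psi> m) (ampl n (psi_iter \<psi> (m - 1) b))"

definition chi :: "('b::zero \<Rightarrow> nat \<Rightarrow> nat \<Rightarrow> 'b) \<Rightarrow> nat \<Rightarrow> nat \<Rightarrow> nat \<Rightarrow> 'b \<Rightarrow> 'b" where
  "chi \<psi> m i j b = the_inv_into UNIV (psi_iter \<psi> (m - 1)) (slice i j (psi_iter \<psi> m b))"

definition star_subalgebra :: "'b::cstar_algebra set \<Rightarrow> bool" where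
  "star_subalgebra A \<longleftrightarrow> 0 \<in> A \<and>
     (\<forall>x\<in>A. \<forall>y\<in>A. x + y \<in> A \<and> x * y \<in> A) \<and>
     (\<forall>c. \<forall>x\<in>A. scaleC c x \<in> A) \<and> (\<forall>x\<in>A. cstar x \<in> A)"

definition abelian :: "'b::times set \<Rightarrow> bool" where
  "abelian A \<longleftrightarrow> (\<forall>x\<in>A. \<forall>y\<in>A. x * y = y * x)"

definition masa :: "'b::cstar_algebra set \<Rightarrow> bool" where
  "masa A \<longleftrightarrow> star_subalgebra A \<and> abelian A \<and>
     (\<forall>A'. star_subalgebra A' \<and> abelian A' \<and> A \<subseteq> A' \<longrightarrow> A' = A)"

end

theory Submission
  imports Defs
begin

text \<open>Write \<open>p = m - 1\<close>, let \<open>a, a' \<in> A\<close> and put \<open>c = \<chi>\<^sub>m\<^sub>i\<^sub>j(a)\<close>. Since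
  \<open>\<psi>\<^sub>m(\<sigma>\<^sub>m(a')) = \<psi>\<^sub>p(a') \<otimes> I\<^sub>n\<close>, slicing the identity \<open>\<psi>\<^sub>m(\<sigma>\<^sub>m(a') a) = \<psi>\<^sub>m(a \<sigma>\<^sub>m(a'))\<close> at
  \<open>(i, j)\<close> in the last tensor factor yields \<open>\<psi>\<^sub>p(a' c) = \<psi>\<^sub>p(c a')\<close>, so \<open>c\<close> commutes with
  \<open>A\<close>. A masa is its own commutant (double commutant argument plus the decomposition
  \<open>x = h + i k\<close> into self-adjoint parts), hence \<open>c \<in> A\<close>.\<close>

section \<open>Commutants and maximal abelian *-subalgebras\<close>

definition commutant :: "'a::times set \<Rightarrow> 'a set" where
  "commutant S = {x. \<forall>s\<in>S. x * s = s * x}"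

lemma commutant_antimono: "S \<subseteq> T \<Longrightarrow> commutant T \<subseteq> commutant S"
  unfolding commutant_def by blast

lemma subset_double_commutant: "S \<subseteq> commutant (commutant S)"
  unfolding commutant_def by auto

lemma abelian_iff_subset_commutant: "abelian S \<longleftrightarrow> S \<subseteq> commutant S"
  unfolding abelian_def commutant_def by auto

lemma star_subalgebra_commutant:
  fixes S :: "'a::cstar_algebra set"
  assumes "\<forall>s\<in>S. cstar s \<in> S"
  shows "star_subalgebra (commutant S)"
  unfolding star_subalgebra_def
proof (intro conjI ballI allI)
  fix x y assume x: "x \<in> commutant S" and y: "y \<in> commutant S"
  show "x + y \<in> commutant S"
    using x y by (simp add: commutant_def distrib_left distrib_right)
  show "x * y \<in> commutant S"
    using x y by (simp add: commutant_def) (metis mult.assoc)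
next
  fix x assume x: "x \<in> commutant S"
  have "cstar x * s = s * cstar x" if "s \<in> S" for s
  proof -
    have "cstar (x * cstar s) = cstar (cstar s * x)"
      using x assms that by (simp add: commutant_def)
    then show ?thesis by (simp add: cstar_mult cstar_cstar)
  qed
  then show "cstar x \<in> commutant S" by (simp add: commutant_def)
qed (auto simp: commutant_def mult_scaleC_left mult_scaleC_right)

lemma
  fixes S :: "'a::cstar_algebra set"
  assumes "abelian S" and "\<forall>s\<in>S. cstar s \<in> S"
  shows star_subalgebra_double_commutant: "star_subalgebra (commutant (commutant S))"
    and abelian_double_commutant: "abelian (commutant (commutant S))"
proof -
  have "star_subalgebra (commutant S)"
    using assms(2) by (rule star_subalgebra_commutant)
  then show "star_subalgebra (commutant (commutant S))"
    by (intro star_subalgebra_commutant) (simp add: star_subalgebra_def)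
  have "commutant (commutant S) \<subseteq> commutant S"
    using assms(1) by (simp add: abelian_iff_subset_commutant commutant_antimono)
  then show "abelian (commutant (commutant S))"
    unfolding abelian_def commutant_def by blast
qed

lemma masa_contains_self_adjoint_commutant:
  assumes "masa A" and "cstar h = h" and "h \<in> commutant A"
  shows "h \<in> A"
proof -
  have sub: "star_subalgebra A" and ab: "abelian A"
    using assms(1) by (auto simp: masa_def)
  let ?S = "insert h A"
  have "abelian ?S"
    using ab assms(3) by (auto simp: abelian_def commutant_def)
  moreover have "\<forall>s\<in>?S. cstar s \<in> ?S"
    using sub assms(2) by (auto simp: star_subalgebra_def)
  ultimately have "star_subalgebra (commutant (commutant ?S))"
      and "abelian (commutant (commutant ?S))"
    by (rule star_subalgebra_double_commutant, rule abelian_double_commutant)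
  moreover have "A \<subseteq> commutant (commutant ?S)"
    using subset_double_commutant[of ?S] by blast
  ultimately have "commutant (commutant ?S) = A"
    using assms(1) by (simp add: masa_def)
  then show ?thesis
    using subset_double_commutant[of ?S] by blast
qed

lemma scaleC_zero_left [simp]: "scaleC 0 x = (0::'a::cstar_algebra)"
  using scaleC_add_left[of 0 0 x] by simp

lemma star_subalgebra_cartesian_decomposition:
  assumes "star_subalgebra C" and "x \<in> C"
  obtains h k where "h \<in> C" "k \<in> C" "cstar h = h" "cstar k = k" "x = h + scaleC \<i> k"
proof
  define h where "h = scaleC (1/2) x + scaleC (1/2) (cstar x)"
  define k where "k = scaleC (-\<i>/2) x + scaleC (\<i>/2) (cstar x)"
  show "h \<in> C" "k \<in> C"
    using assms unfolding h_def k_def star_subalgebra_def by blast+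
  show "cstar h = h" "cstar k = k"
    unfolding h_def k_def by (simp_all add: cstar_add cstar_scaleC cstar_cstar add.commute)
  have "h + scaleC \<i> k
      = (scaleC (1/2) x + scaleC (1/2) x) + (scaleC (1/2) (cstar x) + scaleC (-1/2) (cstar x))"
    unfolding h_def k_def by (simp add: scaleC_add_right scaleC_scaleC algebra_simps)
  also have "\<dots> = x"
    by (simp add: scaleC_add_left[symmetric] scaleC_one)
  finally show "x = h + scaleC \<i> k" ..
qed

lemma masa_commutant_eq:
  assumes "masa A"
  shows "commutant A = A"
proof
  have sub: "star_subalgebra A" and ab: "abelian A"
    using assms by (auto simp: masa_def)
  show "A \<subseteq> commutant A"
    using ab by (simp add: abelian_iff_subset_commutant)
  show "commutant A \<subseteq> A"
  proof
    fix x assume x: "x \<in> commutant A"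
    have "star_subalgebra (commutant A)"
      using sub by (intro star_subalgebra_commutant) (simp add: star_subalgebra_def)
    then obtain h k where "h \<in> commutant A" "k \<in> commutant A"
        and "cstar h = h" "cstar k = k" and x_eq: "x = h + scaleC \<i> k"
      using x by (rule star_subalgebra_cartesian_decomposition)
    then have "h \<in> A" "k \<in> A"
      using assms masa_contains_self_adjoint_commutant by blast+
    then show "x \<in> A"
      using sub x_eq by (simp add: star_subalgebra_def)
  qed
qed

definition index_lists :: "nat \<Rightarrow> nat \<Rightarrow> nat list set" where
  "index_lists n m = {xs. set xs \<subseteq> {1..n} \<and> length xs = m}"

definition tensor_carrier :: "nat \<Rightarrow> nat \<Rightarrow> (nat list \<Rightarrow> nat list \<Rightarrow> 'b::zero) set" where
  "tensor_carrier n m =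
     {X. \<forall>ks ls. ks \<notin> index_lists n m \<or> ls \<notin> index_lists n m \<longrightarrow> X ks ls = 0}"

definition tensor_mult ::
    "nat \<Rightarrow> nat \<Rightarrow> (nat list \<Rightarrow> nat list \<Rightarrow> 'b::semiring_0) \<Rightarrow>
     (nat list \<Rightarrow> nat list \<Rightarrow> 'b) \<Rightarrow> nat list \<Rightarrow> nat list \<Rightarrow> 'b" where
  "tensor_mult n m X Y = (\<lambda>ks ls. \<Sum>ps\<in>index_lists n m. X ks ps * Y ps ls)"

lemma index_lists_0 [simp]: "index_lists n 0 = {[]}"
  unfolding index_lists_def by auto

lemma Nil_notin_index_lists_Suc [simp]: "[] \<notin> index_lists n (Suc m)"
  unfolding index_lists_def by auto

lemma snoc_in_index_lists_Suc [simp]: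
  "ks @ [k] \<in> index_lists n (Suc m) \<longleftrightarrow> ks \<in> index_lists n m \<and> k \<in> {1..n}"
  unfolding index_lists_def by auto

lemma index_lists_Suc:
  "index_lists n (Suc m) = (\<lambda>(qs, q). qs @ [q]) ` (index_lists n m \<times> {1..n})"
proof
  show "index_lists n (Suc m) \<subseteq> (\<lambda>(qs, q). qs @ [q]) ` (index_lists n m \<times> {1..n})"
  proof
    fix xs assume xs: "xs \<in> index_lists n (Suc m)"
    then obtain qs q where "xs = qs @ [q]"
      by (metis Nil_notin_index_lists_Suc rev_exhaust)
    with xs show "xs \<in> (\<lambda>(qs, q). qs @ [q]) ` (index_lists n m \<times> {1..n})"
      by force
  qed
qed auto

lemma sum_index_lists_Suc:
  "(\<Sum>ps\<in>index_lists n (Suc m). f ps) = (\<Sum>qs\<in>index_lists n m. \<Sum>q\<in>{1..n}. f (qs @ [q]))"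
proof -
  have inj: "inj_on (\<lambda>(qs, q). qs @ [q]) (index_lists n m \<times> {1..n})"
    by (auto simp: inj_on_def)
  show ?thesis
    unfolding index_lists_Suc sum.reindex[OF inj] sum.cartesian_product
    by (simp add: case_prod_beta)
qed

lemma ampl_in_tensor_carrier:
  assumes "Y \<in> tensor_carrier n m"
  shows "ampl n Y \<in> tensor_carrier n (Suc m)"
  unfolding tensor_carrier_def
proof (intro CollectI allI impI)
  fix ks ls assume outside: "ks \<notin> index_lists n (Suc m) \<or> ls \<notin> index_lists n (Suc m)"
  show "ampl n Y ks ls = 0"
  proof (cases "ks = [] \<or> ls = []")
    case False
    then obtain ks' k ls' l where "ks = ks' @ [k]" "ls = ls' @ [l]"
      by (metis rev_exhaust)
    with outside assms show ?thesis
      by (auto simp: ampl_def tensor_carrier_def)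
  qed (auto simp: ampl_def)
qed

lemma slice_in_tensor_carrier:
  assumes "X \<in> tensor_carrier n (Suc m)"
  shows "slice i j X \<in> tensor_carrier n m"
  using assms by (auto simp: tensor_carrier_def slice_def)

lemma slice_tensor_mult_ampl_left:
  assumes "i \<in> {1..n}"
  shows "slice i j (tensor_mult n (Suc m) (ampl n Y) X) = tensor_mult n m Y (slice i j X)"
proof (intro ext)
  fix ks ls
  have "slice i j (tensor_mult n (Suc m) (ampl n Y) X) ks ls
      = (\<Sum>qs\<in>index_lists n m. \<Sum>q\<in>{1..n}.
           if q = i then Y ks qs * X (qs @ [q]) (ls @ [j]) else 0)"
    using assms unfolding slice_def tensor_mult_def sum_index_lists_Suc
    by (intro sum.cong refl) (auto simp: ampl_def)
  also have "\<dots> = tensor_mult n m Y (slice i j X) ks ls"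
    using assms by (simp add: tensor_mult_def slice_def)
  finally show "slice i j (tensor_mult n (Suc m) (ampl n Y) X) ks ls
      = tensor_mult n m Y (slice i j X) ks ls" .
qed

lemma slice_tensor_mult_ampl_right:
  assumes "j \<in> {1..n}"
  shows "slice i j (tensor_mult n (Suc m) X (ampl n Y)) = tensor_mult n m (slice i j X) Y"
proof (intro ext)
  fix ks ls
  have "slice i j (tensor_mult n (Suc m) X (ampl n Y)) ks ls
      = (\<Sum>qs\<in>index_lists n m. \<Sum>q\<in>{1..n}.
           if q = j then X (ks @ [i]) (qs @ [q]) * Y qs ls else 0)"
    using assms unfolding slice_def tensor_mult_def sum_index_lists_Suc
    by (intro sum.cong refl) (auto simp: ampl_def)
  also have "\<dots> = tensor_mult n m (slice i j X) Y ks ls"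
    using assms by (simp add: tensor_mult_def slice_def)
  finally show "slice i j (tensor_mult n (Suc m) X (ampl n Y)) ks ls
      = tensor_mult n m (slice i j X) Y ks ls" .
qed

lemma tensor_carrier_Suc_eqI:
  assumes "X \<in> tensor_carrier n (Suc m)" and "X' \<in> tensor_carrier n (Suc m)"
    and "\<And>ks ls k l. ks \<in> index_lists n m \<Longrightarrow> ls \<in> index_lists n m \<Longrightarrow>
           k \<in> {1..n} \<Longrightarrow> l \<in> {1..n} \<Longrightarrow> X (ks @ [k]) (ls @ [l]) = X' (ks @ [k]) (ls @ [l])"
  shows "X = X'"
proof (intro ext)
  fix ks ls
  show "X ks ls = X' ks ls"
  proof (cases "ks \<in> index_lists n (Suc m) \<and> ls \<in> index_lists n (Suc m)")
    case True
    then obtain ks' k ls' l where "ks = ks' @ [k]" "ls = ls' @ [l]"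
      by (metis Nil_notin_index_lists_Suc rev_exhaust)
    with True assms(3) show ?thesis by simp
  next
    case False
    with assms(1,2) show ?thesis by (auto simp: tensor_carrier_def)
  qed
qed

section \<open>The iterates of a *-isomorphism onto \<open>M\<^sub>n \<otimes> B\<close>\<close>

locale Mn_star_iso =
  fixes n :: nat and \<psi> :: "'b::cstar_algebra \<Rightarrow> nat \<Rightarrow> nat \<Rightarrow> 'b"
  assumes star_iso: "star_iso_Mn n \<psi>"
begin

lemma inj_psi: "inj \<psi>"
  using star_iso by (simp add: star_iso_Mn_def)

lemma range_psi: "range \<psi> = Mn_carrier n"
  using star_iso by (simp add: star_iso_Mn_def)

lemma psi_add: "\<psi> (x + y) i j = \<psi> x i j + \<psi> y i j"
  using star_iso by (simp add: star_iso_Mn_def)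

lemma psi_mult: "\<psi> (x * y) i j = (\<Sum>k\<in>{1..n}. \<psi> x i k * \<psi> y k j)"
  using star_iso by (simp add: star_iso_Mn_def)

lemma psi_zero [simp]: "\<psi> 0 i j = 0"
  using psi_add[of 0 0 i j] by simp

lemma psi_sum: "\<psi> (sum f S) i j = (\<Sum>s\<in>S. \<psi> (f s) i j)"
  by (induction S rule: infinite_finite_induct) (simp_all add: psi_add)

lemma psi_outside_eq_0: "i \<notin> {1..n} \<or> j \<notin> {1..n} \<Longrightarrow> \<psi> x i j = 0"
  using range_psi by (auto simp: Mn_carrier_def)

lemma psi_iter_in_tensor_carrier: "psi_iter \<psi> m b \<in> tensor_carrier n m"
proof (induction m)
  case (Suc m)
  have "psi_iter \<psi> (Suc m) b ks ls = 0"
    if "ks \<notin> index_lists n (Suc m) \<or> ls \<notin> index_lists n (Suc m)" for ks ls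
  proof (cases "ks = [] \<or> ls = []")
    case False
    then obtain ks' k ls' l where snoc: "ks = ks' @ [k]" "ls = ls' @ [l]"
      by (metis rev_exhaust)
    show ?thesis
    proof (cases "ks' \<in> index_lists n m \<and> ls' \<in> index_lists n m")
      case True
      with that snoc show ?thesis by (simp add: psi_outside_eq_0)
    next
      case False
      with Suc.IH snoc show ?thesis by (simp add: tensor_carrier_def)
    qed
  qed auto
  then show ?case by (simp add: tensor_carrier_def)
qed (simp add: tensor_carrier_def)

lemma inj_psi_iter: "inj (psi_iter \<psi> m)"
proof (induction m)
  case 0
  show ?case
    by (rule injI) (metis psi_iter.simps(1))
next
  case (Suc m)
  show ?case
  proof (rule injI)
    fix x y assume eq: "psi_iter \<psi> (Suc m) x = psi_iter \<psi> (Suc m) y"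
    have "\<psi> (psi_iter \<psi> m x ks ls) k l = \<psi> (psi_iter \<psi> m y ks ls) k l" for ks ls k l
      using fun_cong[OF fun_cong[OF eq, of "ks @ [k]"], of "ls @ [l]"] by simp
    then have "psi_iter \<psi> m x = psi_iter \<psi> m y"
      using injD[OF inj_psi] by (metis ext)
    then show "x = y"
      using Suc.IH by (auto dest: injD)
  qed
qed

lemma range_psi_iter: "range (psi_iter \<psi> m) = tensor_carrier n m"
proof
  show "range (psi_iter \<psi> m) \<subseteq> tensor_carrier n m"
    using psi_iter_in_tensor_carrier by blast
  show "tensor_carrier n m \<subseteq> range (psi_iter \<psi> m)"
  proof (induction m)
    case 0
    have "X = psi_iter \<psi> 0 (X [] [])" if "X \<in> tensor_carrier n 0" for X :: "_ \<Rightarrow> _ \<Rightarrow> 'b"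
      using that by (auto intro!: ext simp: tensor_carrier_def)
    then show ?case by blast
  next
    case (Suc m)
    show ?case
    proof
      fix X :: "_ \<Rightarrow> _ \<Rightarrow> 'b" assume X: "X \<in> tensor_carrier n (Suc m)"
      define block where "block ks ls k l =
        (if k \<in> {1..n} \<and> l \<in> {1..n} then X (ks @ [k]) (ls @ [l]) else 0)" for ks ls k l
      have block_in_range: "block ks ls \<in> range \<psi>" for ks ls
        by (auto simp: range_psi block_def Mn_carrier_def)
      define Z where "Z ks ls =
        (if ks \<in> index_lists n m \<and> ls \<in> index_lists n m then inv \<psi> (block ks ls) else 0)"
        for ks ls
      have "Z \<in> tensor_carrier n m"
        by (simp add: Z_def tensor_carrier_def)
      with Suc.IH obtain b where b: "psi_iter \<psi> m b = Z"
        by blast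
      have "psi_iter \<psi> (Suc m) b = X"
        using psi_iter_in_tensor_carrier X
        by (rule tensor_carrier_Suc_eqI)
          (simp add: b Z_def f_inv_into_f[OF block_in_range] block_def)
      then show "X \<in> range (psi_iter \<psi> (Suc m))"
        by blast
    qed
  qed
qed

lemma psi_iter_the_inv:
  "X \<in> tensor_carrier n m \<Longrightarrow> psi_iter \<psi> m (the_inv_into UNIV (psi_iter \<psi> m) X) = X"
  using f_the_inv_into_f[OF inj_psi_iter] range_psi_iter by blast

lemma psi_iter_mult:
  "psi_iter \<psi> m (x * y) = tensor_mult n m (psi_iter \<psi> m x) (psi_iter \<psi> m y)"
proof (induction m)
  case (Suc m)
  show ?case
  proof (intro ext)
    fix ks ls
    show "psi_iter \<psi> (Suc m) (x * y) ks ls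
        = tensor_mult n (Suc m) (psi_iter \<psi> (Suc m) x) (psi_iter \<psi> (Suc m) y) ks ls"
    proof (cases "ks = [] \<or> ls = []")
      case False
      then obtain ks' k ls' l where snoc: "ks = ks' @ [k]" "ls = ls' @ [l]"
        by (metis rev_exhaust)
      have "psi_iter \<psi> (Suc m) (x * y) ks ls
          = (\<Sum>ps\<in>index_lists n m. \<Sum>q\<in>{1..n}.
               \<psi> (psi_iter \<psi> m x ks' ps) k q * \<psi> (psi_iter \<psi> m y ps ls') q l)"
        by (simp add: snoc Suc.IH tensor_mult_def psi_sum psi_mult)
      then show ?thesis
        by (simp add: snoc tensor_mult_def sum_index_lists_Suc)
    qed (auto simp: tensor_mult_def)
  qed
qed (auto intro!: ext simp: tensor_mult_def)

lemma psi_iter_sigma: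
  "psi_iter \<psi> (Suc p) (sigma n \<psi> (Suc p) b) = ampl n (psi_iter \<psi> p b)"
  unfolding sigma_def
  by (simp add: psi_iter_the_inv ampl_in_tensor_carrier psi_iter_in_tensor_carrier)

lemma psi_iter_chi:
  "psi_iter \<psi> p (chi \<psi> (Suc p) i j b) = slice i j (psi_iter \<psi> (Suc p) b)"
  unfolding chi_def
  by (simp add: psi_iter_the_inv slice_in_tensor_carrier psi_iter_in_tensor_carrier)

lemma chi_commute_if_sigma_commute:
  assumes "i \<in> {1..n}" and "j \<in> {1..n}"
    and "sigma n \<psi> (Suc p) a' * a = a * sigma n \<psi> (Suc p) a'"
  shows "chi \<psi> (Suc p) i j a * a' = a' * chi \<psi> (Suc p) i j a"
proof -
  let ?c = "chi \<psi> (Suc p) i j a" and ?s = "sigma n \<psi> (Suc p) a'"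
  let ?X = "psi_iter \<psi> (Suc p) a" and ?Y = "psi_iter \<psi> p a'"
  have "psi_iter \<psi> p (?c * a') = tensor_mult n p (slice i j ?X) ?Y"
    by (simp add: psi_iter_mult psi_iter_chi)
  also have "\<dots> = slice i j (psi_iter \<psi> (Suc p) (a * ?s))"
    using assms(2) by (simp add: psi_iter_mult psi_iter_sigma slice_tensor_mult_ampl_right)
  also have "\<dots> = slice i j (psi_iter \<psi> (Suc p) (?s * a))"
    by (simp add: assms(3))
  also have "\<dots> = tensor_mult n p ?Y (slice i j ?X)"
    using assms(1) by (simp add: psi_iter_mult psi_iter_sigma slice_tensor_mult_ampl_left)
  also have "\<dots> = psi_iter \<psi> p (a' * ?c)"
    by (simp add: psi_iter_mult psi_iter_chi)
  finally show ?thesis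
    using inj_psi_iter by (auto dest: injD)
qed

end

theorem corollary3p3:
  fixes \<psi> :: "'b::cstar_algebra \<Rightarrow> nat \<Rightarrow> nat \<Rightarrow> 'b" and n m :: nat and A :: "'b set"
  assumes "star_iso_Mn n \<psi>"
    and "\<psi> 1 = Mn_unit n"
    and "m \<ge> 1"
    and "masa A"
    and "sigma n \<psi> m ` A \<subseteq> A"
  shows "\<forall>i\<in>{1..n}. \<forall>j\<in>{1..n}. chi \<psi> m i j ` A \<subseteq> A"
proof (intro ballI subsetI)
  interpret Mn_star_iso n \<psi>
    using assms(1) by unfold_locales
  obtain p where m: "m = Suc p"
    using assms(3) by (cases m) auto
  fix i j c assume ij: "i \<in> {1..n}" "j \<in> {1..n}" and "c \<in> chi \<psi> m i j ` A"
  then obtain a where a: "a \<in> A" and c: "c = chi \<psi> m i j a"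
    by blast
  have "c * a' = a' * c" if "a' \<in> A" for a'
  proof -
    have "sigma n \<psi> m a' \<in> A"
      using assms(5) that by blast
    then have "sigma n \<psi> m a' * a = a * sigma n \<psi> m a'"
      using assms(4) a by (simp add: masa_def abelian_def)
    with ij show ?thesis
      unfolding c m by (rule chi_commute_if_sigma_commute)
  qed
  then have "c \<in> commutant A"
    by (simp add: commutant_def)
  then show "c \<in> A"
    using masa_commutant_eq[OF assms(4)] by simp
qed

end
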